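(* Let $\mathbb{G}$ be a homogeneous group of homogeneous dimension $Q\geq 3$ and $|\cdot|$ a homogeneous quasi-norm. Let $2\leq p<Q$, $-\infty<\alpha<\frac{Q-p}{p}$, let $b\in\mathbb{R}$ be arbitrary and set $\delta_1=Q-p-\alpha p-\frac{Q+pb}{p}$, $\delta_2=Q-p-\alpha p-\frac{bp}{p-1}$. Then for all $f\in C_0^\infty(\mathbb{G}\setminus\{0\})$, $$\int_{\mathbb{G}}\frac{|\mathcal{R}f(x)|^p}{|x|^{\alpha p}}dx-\left(\frac{Q-p-\alpha p}{p}\right)^p\int_{\mathbb{G}}\frac{|f(x)|^p}{|x|^{(\alpha+1)p}}dx\geq C_p\frac{\left(\int_{\mathbb{G}}|f(x)|^p|x|^{\delta_1}dx\right)^p}{\left(\int_{\mathbb{G}}|f(x)|^p|x|^{\delta_2}dx\right)^{p-1}},$$ where $C_p=c_p\left|\frac{Q(p-1)-pb}{p^2}\right|^p$ and $c_p=\min_{0<t\leq 1/2}\left((1-t)^p-t^p+pt^{p-1}\right)$.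
   Context: A homogeneous group is a connected simply connected Lie group $\mathbb{G}$ whose Lie algebra carries a family of dilations $D_\lambda=\mathrm{Exp}(A\ln\lambda)$, $\lambda>0$, with $A$ diagonalisable with positive eigenvalues, each $D_\lambda$ being a Lie algebra automorphism; these induce dilations $x\mapsto\lambda x$ on $\mathbb{G}$. The homogeneous dimension is $Q=\mathrm{Tr}\,A$. A homogeneous quasi-norm is a continuous nonnegative function $|\cdot|$, vanishing only at $0$, with $|x^{-1}|=|x|$ and $|\lambda x|=\lambda|x|$. Writing $x=ry$ with $r=|x|$ and $|y|=1$, the radial derivative is $\mathcal{R}f(x)=\frac{d}{dr}f(ry)$. Integrals are with respect to Haar measure. *)

theory Defs
  imports "HOL-Analysis.Analysis"
begin

definition dpart :: "'a::euclidean_space \<Rightarrow> ('a \<Rightarrow> 'b::real_normed_vector) \<Rightarrow> 'a \<Rightarrow> 'b" where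
  "dpart v f x = vector_derivative (\<lambda>t. f (x + t *\<^sub>R v)) (at 0)"

fun iter_dpart :: "'a::euclidean_space list \<Rightarrow> ('a \<Rightarrow> 'b::real_normed_vector) \<Rightarrow> 'a \<Rightarrow> 'b" where
  "iter_dpart [] f = f"
| "iter_dpart (v # vs) f = dpart v (iter_dpart vs f)"

definition C_infinity_on :: "'a::euclidean_space set \<Rightarrow> ('a \<Rightarrow> 'b::real_normed_vector) \<Rightarrow> bool" where
  "C_infinity_on S f \<longleftrightarrow>
     (\<forall>vs. set vs \<subseteq> Basis \<longrightarrow>
        continuous_on S (iter_dpart vs f) \<and>
        (\<forall>x\<in>S. \<forall>v\<in>Basis. (\<lambda>t. iter_dpart vs f (x + t *\<^sub>R v)) differentiable (at 0)))"

(* Dilations in (exponential) coordinates adapted to the eigenbasis of A,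
   with weights \<nu> i = eigenvalues of A *)
definition dil :: "('n::finite \<Rightarrow> real) \<Rightarrow> real \<Rightarrow> real^'n \<Rightarrow> real^'n" where
  "dil \<nu> l x = (\<chi> i. l powr (\<nu> i) * x $ i)"

(* homogeneous dimension Q = Tr A *)
definition hom_dim :: "('n::finite \<Rightarrow> real) \<Rightarrow> real" where
  "hom_dim \<nu> = (\<Sum>i\<in>UNIV. \<nu> i)"

(* A homogeneous group, realised on R^N (exponential coordinates): a smooth
   group law with identity 0, positive dilation weights, dilations are group
   automorphisms, and Lebesgue measure is the (left) Haar measure. *)
definition homogeneous_group ::
  "(real^'n::finite \<Rightarrow> real^'n \<Rightarrow> real^'n) \<Rightarrow> (real^'n \<Rightarrow> real^'n) \<Rightarrow> ('n \<Rightarrow> real) \<Rightarrow> bool" where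
  "homogeneous_group gmul ginv \<nu> \<longleftrightarrow>
     (\<forall>x y z. gmul (gmul x y) z = gmul x (gmul y z)) \<and>
     (\<forall>x. gmul 0 x = x \<and> gmul x 0 = x) \<and>
     (\<forall>x. gmul (ginv x) x = 0 \<and> gmul x (ginv x) = 0) \<and>
     C_infinity_on UNIV (\<lambda>(x, y). gmul x y) \<and>
     C_infinity_on UNIV ginv \<and>
     (\<forall>i. \<nu> i > 0) \<and>
     (\<forall>l>0. \<forall>x y. dil \<nu> l (gmul x y) = gmul (dil \<nu> l x) (dil \<nu> l y)) \<and>
     (\<forall>y. distr lborel lborel (gmul y) = lborel)"

definition homogeneous_quasi_norm ::
  "(real^'n::finite \<Rightarrow> real^'n) \<Rightarrow> ('n \<Rightarrow> real) \<Rightarrow> (real^'n \<Rightarrow> real) \<Rightarrow> bool" where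
  "homogeneous_quasi_norm ginv \<nu> N \<longleftrightarrow>
     continuous_on UNIV N \<and>
     (\<forall>x. N x \<ge> 0 \<and> (N x = 0 \<longleftrightarrow> x = 0)) \<and>
     (\<forall>x. N (ginv x) = N x) \<and>
     (\<forall>l>0. \<forall>x. N (dil \<nu> l x) = l * N x)"

(* radial derivative: x = r y with r = |x|, |y| = 1, Rf(x) = d/dr f(r y) *)
definition radial_deriv ::
  "('n::finite \<Rightarrow> real) \<Rightarrow> (real^'n \<Rightarrow> real) \<Rightarrow> (real^'n \<Rightarrow> real) \<Rightarrow> real^'n \<Rightarrow> real" where
  "radial_deriv \<nu> N f x = deriv (\<lambda>r. f (dil \<nu> r (dil \<nu> (1 / N x) x))) (N x)"

definition C0_infinity_punctured :: "(real^'n::finite \<Rightarrow> real) set" where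
  "C0_infinity_punctured =
     {f. C_infinity_on (UNIV - {0}) f \<and>
         compact (closure {x. f x \<noteq> 0}) \<and> 0 \<notin> closure {x. f x \<noteq> 0}}"

definition c_const :: "real \<Rightarrow> real" where
  "c_const p = (INF t\<in>{0<..1/2}. (1 - t) powr p - t powr p + p * t powr (p - 1))"

end

theory Submission
  imports Defs
begin

text \<open>
  Write \<open>Q = hom_dim \<nu>\<close>, \<open>|x| = N x\<close>, \<open>K = (Q - p - \<alpha> p) / p\<close>, and let \<open>Df\<close> be the Euler derivative of \<open>f\<close>
  along the dilations, so that \<open>Rf = Df / |x|\<close>. The elementary inequality
  \<open>|a + b|\<^sup>p \<ge> |a|\<^sup>p + p |a|\<^bsup>p-2\<^esup> a b + c\<^sub>p |b|\<^sup>p\<close> with \<open>a = -K f / |x|\<close> and \<open>b = Rf + K f / |x|\<close>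
  bounds the Hardy integrand from below by \<open>c\<^sub>p |Rf + K f / |x||\<^sup>p |x|\<^bsup>-\<alpha> p\<^esup>\<close> plus a cross term.
  Since Lebesgue measure scales by \<open>l\<^sup>Q\<close> under dilations, integrating by parts along them gives
  \<open>\<integral> (Dg) |x|\<^sup>t = -(Q + t) \<integral> g |x|\<^sup>t\<close>; this makes the cross term vanish. The same identity with
  \<open>g = |f|\<^sup>p\<close> and \<open>t = \<delta>\<^sub>1\<close> writes \<open>(Q (p - 1) - p b) / p \<integral> |f|\<^sup>p |x|\<^bsup>\<delta>\<^sub>1\<^esup>\<close> as an integral of
  \<open>|f|\<^bsup>p-2\<^esup> f (Df + K f) |x|\<^bsup>\<delta>\<^sub>1\<^esup>\<close>, and Holder's inequality bounds this by the remainder term and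
  \<open>\<integral> |f|\<^sup>p |x|\<^bsup>\<delta>\<^sub>2\<^esup>\<close>.
\<close>

section \<open>An elementary inequality for powers\<close>

definition dabs_powr :: "real \<Rightarrow> real \<Rightarrow> real" where
  "dabs_powr p y = p * (\<bar>y\<bar> powr (p - 1) * sgn y)"

lemma powr_eq_mult_powr_minus_one: "0 < (x::real) \<Longrightarrow> x powr a = x * x powr (a - 1)"
  by (simp add: powr_diff)

lemma tendsto_abs_powr_zero:
  assumes "q > 0"
  shows "((\<lambda>h::real. \<bar>h\<bar> powr q) \<longlongrightarrow> 0) (at 0)"
proof -
  have "((\<lambda>h::real. \<bar>h\<bar> powr q) \<longlongrightarrow> \<bar>0\<bar> powr q) (at 0)"
    using assms by (intro tendsto_intros tendsto_powr') auto
  then show ?thesis by simp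
qed

lemma has_real_derivative_abs_powr:
  assumes p: "p > 1"
  shows "((\<lambda>y. \<bar>y\<bar> powr p) has_real_derivative dabs_powr p y) (at y)"
proof -
  consider "y = 0" | "y > 0" | "y < 0" by linarith
  then show ?thesis
  proof cases
    case 1
    have "((\<lambda>h. (\<bar>h\<bar> powr p - \<bar>0\<bar> powr p) / h) \<longlongrightarrow> 0) (at 0)"
    proof (rule tendsto_norm_zero_cancel, rule Lim_null_comparison)
      show "\<forall>\<^sub>F h in at 0. norm (norm ((\<bar>h\<bar> powr p - \<bar>0\<bar> powr p) / (h::real))) \<le> \<bar>h\<bar> powr (p - 1)"
        by (auto simp: eventually_at_filter powr_diff abs_divide)
    qed (use p tendsto_abs_powr_zero in auto)
    then show ?thesis using 1 by (simp add: DERIV_def dabs_powr_def)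
  next
    case 2
    have "((\<lambda>y. y powr p) has_real_derivative p * y powr (p - 1)) (at y)"
      using 2 by (auto intro!: derivative_eq_intros)
    then have "((\<lambda>y. \<bar>y\<bar> powr p) has_real_derivative p * y powr (p - 1)) (at y)"
      by (rule has_field_derivative_transform_within_open[where S="{0<..}"]) (use 2 in auto)
    then show ?thesis using 2 by (simp add: dabs_powr_def)
  next
    case 3
    have "((\<lambda>y. (-y) powr p) has_real_derivative p * (-y) powr (p - 1) * (-1)) (at y)"
      using 3 by (auto intro!: derivative_eq_intros)
    then have "((\<lambda>y. \<bar>y\<bar> powr p) has_real_derivative p * (-y) powr (p - 1) * (-1)) (at y)"
      by (rule has_field_derivative_transform_within_open[where S="{..<0}"]) (use 3 in auto)
    then show ?thesis using 3 by (simp add: dabs_powr_def)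
  qed
qed

lemma isCont_abs_powr_sgn:
  assumes q: "q > 0"
  shows "isCont (\<lambda>y::real. \<bar>y\<bar> powr q * sgn y) x"
proof -
  consider "x = 0" | "x > 0" | "x < 0" by linarith
  then show ?thesis
  proof cases
    case 1
    have "((\<lambda>y::real. \<bar>y\<bar> powr q * sgn y) \<longlongrightarrow> 0) (at 0)"
    proof (rule tendsto_norm_zero_cancel, rule Lim_null_comparison)
      show "\<forall>\<^sub>F h in at 0. norm (norm (\<bar>h\<bar> powr q * sgn (h::real))) \<le> \<bar>h\<bar> powr q"
        by (auto simp: eventually_at_filter abs_mult sgn_real_def)
    qed (use q tendsto_abs_powr_zero in auto)
    then show ?thesis using 1 by (simp add: isCont_def)
  next
    case 2
    have "eventually (\<lambda>y. \<bar>y\<bar> powr q * sgn y = y powr q) (nhds x)"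
      using eventually_nhds_in_open[of "{0<..}" x] 2 by (auto elim: eventually_mono)
    moreover have "isCont (\<lambda>y. y powr q) x" using 2 by (intro continuous_intros) auto
    ultimately show ?thesis by (simp add: isCont_cong)
  next
    case 3
    have "eventually (\<lambda>y. \<bar>y\<bar> powr q * sgn y = - ((-y) powr q)) (nhds x)"
      using eventually_nhds_in_open[of "{..<0}" x] 3 by (auto elim: eventually_mono)
    moreover have "isCont (\<lambda>y. - ((-y) powr q)) x" using 3 by (intro continuous_intros) auto
    ultimately show ?thesis by (simp add: isCont_cong)
  qed
qed

lemma continuous_on_dabs_powr: "p > 1 \<Longrightarrow> continuous_on UNIV (dabs_powr p)"
  unfolding dabs_powr_def
  by (intro continuous_at_imp_continuous_on ballI continuous_intros isCont_abs_powr_sgn) auto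

lemma continuous_on_dabs_powr_comp [continuous_intros]:
  "p > 1 \<Longrightarrow> continuous_on A g \<Longrightarrow> continuous_on A (\<lambda>x. dabs_powr p (g x))"
  by (rule continuous_on_compose2[OF continuous_on_dabs_powr]) auto

lemma dabs_powr_mult: "dabs_powr p (s * y) = \<bar>s\<bar> powr (p - 1) * sgn s * dabs_powr p y"
  by (simp add: dabs_powr_def abs_mult powr_mult sgn_mult algebra_simps)

lemma dabs_powr_mult_self: "dabs_powr p y * y = p * \<bar>y\<bar> powr p"
proof (cases "y = 0")
  case False
  have "sgn y * y = \<bar>y\<bar>" by (simp add: sgn_if abs_if)
  moreover have "\<bar>y\<bar> powr p = \<bar>y\<bar> * \<bar>y\<bar> powr (p - 1)"
    using powr_eq_mult_powr_minus_one[of "\<bar>y\<bar>" p] False by simp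
  ultimately show ?thesis unfolding dabs_powr_def by (simp add: algebra_simps)
qed (simp add: dabs_powr_def)

lemma abs_dabs_powr: "p \<ge> 0 \<Longrightarrow> \<bar>dabs_powr p y\<bar> = p * \<bar>y\<bar> powr (p - 1)"
  by (cases "y = 0") (auto simp: dabs_powr_def abs_mult)

definition c_const_fun :: "real \<Rightarrow> real \<Rightarrow> real" where
  "c_const_fun p t = (1 - t) powr p - t powr p + p * t powr (p - 1)"

lemma c_const_eq_INF: "c_const p = (INF t\<in>{0<..1/2}. c_const_fun p t)"
  by (simp add: c_const_def c_const_fun_def)

lemma c_const_fun_nonneg: assumes "p \<ge> 1" "0 < t" "t \<le> 1/2" shows "c_const_fun p t \<ge> 0"
proof -
  have "t powr p \<le> (1 - t) powr p" using assms by (intro powr_mono2) auto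
  then show ?thesis unfolding c_const_fun_def using assms by auto
qed

lemma c_const_le_c_const_fun: assumes "p \<ge> 1" "0 < t" "t \<le> 1/2" shows "c_const p \<le> c_const_fun p t"
  unfolding c_const_eq_INF
  by (rule cINF_lower) (use assms c_const_fun_nonneg[OF assms(1)] in \<open>auto intro!: bdd_belowI2[where m=0]\<close>)

lemma c_const_nonneg: assumes "p \<ge> 1" shows "c_const p \<ge> 0"
  unfolding c_const_eq_INF
  by (rule cINF_greatest) (use assms c_const_fun_nonneg[OF assms(1)] in auto)

lemma c_const_le_one: assumes p: "p \<ge> 2" shows "c_const p \<le> 1"
proof -
  have "((\<lambda>t. c_const_fun p t) \<longlongrightarrow> (1 - 0) powr p - 0 powr p + p * 0 powr (p - 1)) (at_right 0)"
    unfolding c_const_fun_def using p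
    by (intro tendsto_intros tendsto_powr') (auto intro: eventually_mono[OF eventually_at_right_less])
  moreover have "eventually (\<lambda>t. c_const p \<le> c_const_fun p t) (at_right (0::real))"
    unfolding eventually_at_right_field by (rule exI[of _ "1/2"]) (use p in \<open>auto intro!: c_const_le_c_const_fun\<close>)
  ultimately have "c_const p \<le> (1 - 0) powr p - 0 powr p + p * 0 powr (p - 1)"
    by (rule tendsto_lowerbound) simp
  then show ?thesis by simp
qed

lemma c_const_fun_half_le:
  assumes p: "p \<ge> 2" and t: "1/2 \<le> t" "t \<le> 1"
  shows "c_const_fun p (1/2) \<le> c_const_fun p t"
proof (rule DERIV_nonneg_imp_increasing_open[OF t(1)])
  fix x :: real assume x: "1/2 < x" "x < t"
  have d: "(c_const_fun p has_real_derivative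
       (- p * (1 - x) powr (p - 1) - p * x powr (p - 1) + p * ((p - 1) * x powr (p - 2)))) (at x)"
    unfolding c_const_fun_def[abs_def] using x t by (auto intro!: derivative_eq_intros simp: algebra_simps)
  have "(1 - x) powr (p - 1) = (1 - x) * (1 - x) powr (p - 2)"
    using x t powr_eq_mult_powr_minus_one[of "1 - x" "p - 1"] by simp
  also have "\<dots> \<le> (1 - x) * x powr (p - 2)"
    using x t p by (intro mult_left_mono powr_mono2) auto
  finally have "(1 - x) powr (p - 1) + x powr (p - 1) \<le> x powr (p - 2)"
    using x powr_eq_mult_powr_minus_one[of x "p - 1"] by (simp add: algebra_simps)
  also have "\<dots> \<le> (p - 1) * x powr (p - 2)" using p by (simp add: mult_le_cancel_right1)
  finally have "p * ((1 - x) powr (p - 1) + x powr (p - 1)) \<le> p * ((p - 1) * x powr (p - 2))"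
    by (rule mult_left_mono) (use p in auto)
  then show "\<exists>y. (c_const_fun p has_real_derivative y) (at x) \<and> 0 \<le> y"
    using d by (intro exI[of _ "- p * (1 - x) powr (p - 1) - p * x powr (p - 1) + p * ((p - 1) * x powr (p - 2))"])
      (simp add: algebra_simps)
next
  show "continuous_on {1/2..t} (c_const_fun p)"
    unfolding c_const_fun_def using p t by (intro continuous_intros continuous_on_powr') auto
qed

lemma c_const_le_c_const_fun_le_one: assumes p: "p \<ge> 2" and t: "0 < t" "t \<le> 1" shows "c_const p \<le> c_const_fun p t"
proof (cases "t \<le> 1/2")
  case True then show ?thesis using c_const_le_c_const_fun[of p t] p t by simp
next
  case False
  have "c_const p \<le> c_const_fun p (1/2)" using c_const_le_c_const_fun[of p "1/2"] p by simp
  also have "\<dots> \<le> c_const_fun p t" using c_const_fun_half_le[OF p, of t] False t by simp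
  finally show ?thesis .
qed

lemma add_powr_le_powr_add:
  fixes q a b :: real assumes q: "q \<ge> 1" and ab: "a \<ge> 0" "b \<ge> 0"
  shows "a powr q + b powr q \<le> (a + b) powr q"
proof (cases "a + b = 0")
  case True
  then have "a = 0" "b = 0" using ab by linarith+
  then show ?thesis by simp
next
  case False
  have "a powr q = a * a powr (q - 1)" "b powr q = b * b powr (q - 1)"
    using ab q powr_eq_mult_powr_minus_one[of a q] powr_eq_mult_powr_minus_one[of b q]
    by (cases "a = 0"; cases "b = 0"; simp)+
  moreover have "(a + b) powr q = a * (a + b) powr (q - 1) + b * (a + b) powr (q - 1)"
    using ab False powr_eq_mult_powr_minus_one[of "a + b" q] by (simp add: distrib_right)
  moreover have "a * a powr (q - 1) \<le> a * (a + b) powr (q - 1)" "b * b powr (q - 1) \<le> b * (a + b) powr (q - 1)"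
    using ab q by (intro mult_left_mono powr_mono2; simp)+
  ultimately show ?thesis by linarith
qed

lemma one_plus_powr_ge:
  fixes p s :: real assumes p: "p \<ge> 2" and s: "s \<ge> 0"
  shows "1 + p * s + s powr p \<le> (1 + s) powr p"
proof -
  let ?k = "\<lambda>y. (1 + y) powr p - 1 - p * y - y powr p"
  have "?k 0 \<le> ?k s"
  proof (rule DERIV_nonneg_imp_increasing_open[OF s])
    fix x :: real assume x: "0 < x" "x < s"
    have "1 powr (p - 1) + x powr (p - 1) \<le> (1 + x) powr (p - 1)"
      using p x by (intro add_powr_le_powr_add) auto
    then have "0 \<le> p * (1 + x) powr (p - 1) - p - p * x powr (p - 1)"
      using p mult_left_mono[of "1 + x powr (p - 1)" "(1 + x) powr (p - 1)" p] by (simp add: algebra_simps)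
    moreover have "(?k has_real_derivative (p * (1 + x) powr (p - 1) - p - p * x powr (p - 1))) (at x)"
      using x by (auto intro!: derivative_eq_intros)
    ultimately show "\<exists>y. (?k has_real_derivative y) (at x) \<and> 0 \<le> y" by blast
  next
    show "continuous_on {0..s} ?k" using p by (intro continuous_intros continuous_on_powr') auto
  qed
  then show ?thesis by simp
qed

lemma one_minus_powr_ge:
  fixes p u :: real assumes p: "p \<ge> 2" and u: "0 \<le> u" "u \<le> 1"
  shows "1 - p * u + u powr p \<le> (1 - u) powr p"
proof -
  let ?k = "\<lambda>y. (1 - y) powr p - 1 + p * y - y powr p"
  have "?k 0 \<le> ?k u"
  proof (rule DERIV_nonneg_imp_increasing_open[OF u(1)])
    fix x :: real assume x: "0 < x" "x < u"
    have "(1 - x) powr (p - 1) \<le> 1 - x" "x powr (p - 1) \<le> x"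
      using x u p by (intro powr_le_one_le; simp)+
    then have "0 \<le> - p * (1 - x) powr (p - 1) + p - p * x powr (p - 1)"
      using p mult_left_mono[of "(1 - x) powr (p - 1) + x powr (p - 1)" 1 p] by (simp add: algebra_simps)
    moreover have "(?k has_real_derivative (- p * (1 - x) powr (p - 1) + p - p * x powr (p - 1))) (at x)"
      using x u by (auto intro!: derivative_eq_intros)
    ultimately show "\<exists>y. (?k has_real_derivative y) (at x) \<and> 0 \<le> y" by blast
  next
    show "continuous_on {0..u} ?k" using p u by (intro continuous_intros continuous_on_powr') auto
  qed
  then show ?thesis by simp
qed

lemma one_plus_powr_ge_c_const:
  fixes p s :: real assumes p: "p \<ge> 2"
  shows "1 + p * s + c_const p * \<bar>s\<bar> powr p \<le> \<bar>1 + s\<bar> powr p"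
proof -
  have c: "c_const p * \<bar>s\<bar> powr p \<le> \<bar>s\<bar> powr p"
    using c_const_le_one[OF p] mult_right_mono[of "c_const p" 1 "\<bar>s\<bar> powr p"] by simp
  consider "s \<ge> 0" | "-1 \<le> s" "s < 0" | "s < -1" by linarith
  then show ?thesis
  proof cases
    case 1
    then show ?thesis using one_plus_powr_ge[OF p 1] c by simp
  next
    case 2
    have "1 + p * s + (- s) powr p \<le> (1 + s) powr p" using one_minus_powr_ge[OF p, of "-s"] 2 by simp
    moreover have "\<bar>s\<bar> = - s" "\<bar>1 + s\<bar> = 1 + s" using 2 by auto
    ultimately show ?thesis using c by (simp only:)
  next
    case 3
    text \<open>Substituting \<open>s = -1/t\<close> turns the claim into \<open>c_const p \<le> c_const_fun p t\<close>.\<close>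
    define t where "t = -1 / s"
    have t: "0 < t" "t < 1" using 3 by (auto simp: t_def field_simps)
    have s_eq: "s = -1 / t" using 3 by (simp add: t_def)
    define T where "T = t powr p"
    define A where "A = (1 - t) powr p"
    have T: "T > 0" using t by (simp add: T_def)
    have "t powr (p - 1) = T / t" using powr_eq_mult_powr_minus_one[of t p] t by (simp add: T_def)
    then have c: "c_const p \<le> A - T + p * (T / t)"
      using c_const_le_c_const_fun_le_one[OF p, of t] t by (simp add: c_const_fun_def A_def T_def)
    have e1: "\<bar>1 + s\<bar> powr p = A / T"
    proof -
      have "\<bar>1 + s\<bar> = (1 - t) / t" using t by (simp add: s_eq field_simps abs_if)
      then show ?thesis by (simp add: powr_divide A_def T_def)
    qed
    have e2: "\<bar>s\<bar> powr p = 1 / T"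
    proof -
      have "\<bar>s\<bar> = 1 / t" using t by (simp add: s_eq abs_if)
      then show ?thesis by (simp add: powr_divide T_def)
    qed
    have "T * t + t * c_const p \<le> A * t + T * p" using c t by (simp add: field_simps)
    from mult_left_mono[OF this, of T] have "(1 + p * s + c_const p * (1 / T)) * T \<le> A"
      using t T by (simp add: s_eq field_simps)
    then show ?thesis using e1 e2 T by (simp add: le_divide_eq)
  qed
qed

lemma abs_add_powr_ge:
  fixes p a b :: real assumes p: "p \<ge> 2"
  shows "\<bar>a\<bar> powr p + dabs_powr p a * b + c_const p * \<bar>b\<bar> powr p \<le> \<bar>a + b\<bar> powr p"
proof (cases "a = 0")
  case True
  then show ?thesis
    using c_const_le_one[OF p] mult_right_mono[of "c_const p" 1 "\<bar>b\<bar> powr p"] by (simp add: dabs_powr_def)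
next
  case False
  define s where "s = b / a"
  have b: "b = a * s" using False by (simp add: s_def)
  have "dabs_powr p a * b = p * \<bar>a\<bar> powr p * s"
    using dabs_powr_mult_self[of p a] by (simp add: b algebra_simps)
  moreover have "\<bar>a + b\<bar> powr p = \<bar>a\<bar> powr p * \<bar>1 + s\<bar> powr p"
  proof -
    have "a + b = a * (1 + s)" by (simp add: b algebra_simps)
    then show ?thesis by (simp add: abs_mult powr_mult)
  qed
  moreover have "\<bar>b\<bar> powr p = \<bar>a\<bar> powr p * \<bar>s\<bar> powr p"
    by (simp add: b abs_mult powr_mult)
  moreover have "\<bar>a\<bar> powr p * (1 + p * s + c_const p * \<bar>s\<bar> powr p) \<le> \<bar>a\<bar> powr p * \<bar>1 + s\<bar> powr p"
    using one_plus_powr_ge_c_const[OF p, of s] by (intro mult_left_mono) auto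
  ultimately show ?thesis by (simp add: algebra_simps)
qed

lemma hardy_pointwise_inequality:
  fixes p K r y z \<alpha> :: real
  assumes p: "p \<ge> 2" and K: "K > 0" and r: "r > 0"
  shows "K powr p * (\<bar>y\<bar> powr p / r powr ((\<alpha> + 1) * p))
           - K powr (p - 1) * (dabs_powr p y * (z + K * y) * r powr (- ((\<alpha> + 1) * p)))
           + c_const p * (\<bar>z / r + K * y / r\<bar> powr p / r powr (\<alpha> * p))
         \<le> \<bar>z / r\<bar> powr p / r powr (\<alpha> * p)"
proof -
  define R where "R = r powr (\<alpha> * p)"
  have R: "R > 0" using r by (simp add: R_def)
  have rpR: "r powr ((\<alpha> + 1) * p) = r powr p * R"
    by (simp add: R_def powr_add[symmetric] algebra_simps)
  then have rR: "r powr ((\<alpha> + 1) * p) = r powr (p - 1) * r * R"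
    using powr_eq_mult_powr_minus_one[OF r, of p] by (simp add: ac_simps)
  define a where "a = - (K / r) * y"
  define b where "b = z / r + K * y / r"
  have "\<bar>a\<bar> powr p + dabs_powr p a * b + c_const p * \<bar>b\<bar> powr p \<le> \<bar>a + b\<bar> powr p"
    using abs_add_powr_ge[OF p] .
  then have "(\<bar>a\<bar> powr p + dabs_powr p a * b + c_const p * \<bar>b\<bar> powr p) / R \<le> \<bar>z / r\<bar> powr p / R"
    using R by (intro divide_right_mono) (auto simp: a_def b_def)
  moreover have "\<bar>a\<bar> powr p / R = K powr p * (\<bar>y\<bar> powr p / r powr ((\<alpha> + 1) * p))"
    unfolding rpR using K r R by (simp add: a_def abs_mult powr_mult powr_divide)
  moreover have "dabs_powr p a * b / R
      = - (K powr (p - 1) * (dabs_powr p y * (z + K * y) * r powr (- ((\<alpha> + 1) * p))))"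
  proof -
    have da: "dabs_powr p a = - (K powr (p - 1) / r powr (p - 1)) * dabs_powr p y"
      using K r unfolding a_def dabs_powr_mult by (simp add: powr_divide)
    have bz: "b = (z + K * y) / r" using r by (simp add: b_def add_divide_distrib)
    have rt: "r powr (- ((\<alpha> + 1) * p)) = 1 / (r powr (p - 1) * r * R)"
      using r by (simp add: powr_minus_divide rR)
    show ?thesis using r R unfolding da bz rt by (simp add: field_simps)
  qed
  ultimately show ?thesis by (simp add: R_def b_def add_divide_distrib diff_divide_distrib)
qed

section \<open>Holder's inequality\<close>

lemma Holder_inequality:
  fixes F G :: "'a \<Rightarrow> real" and p q :: real
  assumes pq: "p > 1" "q > 1" "1/p + 1/q = 1"
    and nnF: "\<And>x. F x \<ge> 0" and nnG: "\<And>x. G x \<ge> 0"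
    and iF: "integrable M (\<lambda>x. F x powr p)" and iG: "integrable M (\<lambda>x. G x powr q)"
    and iFG: "integrable M (\<lambda>x. F x * G x)"
  shows "(\<integral>x. F x * G x \<partial>M) \<le> (\<integral>x. F x powr p \<partial>M) powr (1/p) * (\<integral>x. G x powr q \<partial>M) powr (1/q)"
proof -
  define a where "a = (\<integral>x. F x powr p \<partial>M)"
  define b where "b = (\<integral>x. G x powr q \<partial>M)"
  have a0: "a \<ge> 0" "b \<ge> 0" unfolding a_def b_def by (auto intro!: integral_nonneg_AE)
  show ?thesis
  proof (cases "a = 0 \<or> b = 0")
    case True
    have "AE x in M. F x * G x = 0"
      using True integral_nonneg_eq_0_iff_AE[OF iF] integral_nonneg_eq_0_iff_AE[OF iG]
      by (auto simp: a_def b_def elim: AE_mp)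
    then have "(\<integral>x. F x * G x \<partial>M) = 0" using integral_cong_AE[of "\<lambda>x. F x * G x" M "\<lambda>_. 0"] iFG by auto
    then show ?thesis by (simp add: a_def[symmetric] b_def[symmetric])
  next
    case False
    then have ab: "a > 0" "b > 0" using a0 by auto
    define A where "A = a powr (1/p)"
    define B where "B = b powr (1/q)"
    have AB: "A > 0" "B > 0" using ab by (auto simp: A_def B_def)
    have Ap: "A powr p = a" and Bq: "B powr q = b" using ab pq by (simp_all add: A_def B_def powr_powr)
    have Young: "F x * G x / (A * B) \<le> F x powr p / (p * a) + G x powr q / (q * b)" for x
    proof -
      have "(F x / A) * (G x / B) \<le> (F x / A) powr p / p + (G x / B) powr q / q"
        by (rule Youngs_inequality) (use pq nnF nnG AB in auto)
      then show ?thesis using Ap Bq by (simp add: powr_divide mult.commute)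
    qed
    have "(\<integral>x. F x * G x / (A * B) \<partial>M) \<le> (\<integral>x. F x powr p / (p * a) + G x powr q / (q * b) \<partial>M)"
      by (rule integral_mono) (use iF iG iFG Young in auto)
    also have "\<dots> = 1" using iF iG ab pq by (simp add: a_def[symmetric] b_def[symmetric])
    finally show ?thesis using AB by (simp add: A_def B_def a_def b_def divide_le_eq)
  qed
qed

section \<open>Differentiability from continuous partial derivatives\<close>

lemma increment_bound_by_partials:
  fixes f :: "real^'n::finite \<Rightarrow> real" and d :: "'n \<Rightarrow> real^'n \<Rightarrow> real"
  assumes line: "\<And>x i. ((\<lambda>t. f (x + t *\<^sub>R axis i 1)) has_real_derivative d i x) (at 0)"
    and near: "\<And>y i. dist y x < \<delta> \<Longrightarrow> \<bar>d i y - d i x\<bar> \<le> \<epsilon>"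
    and h: "norm h < \<delta>"
  shows "\<bar>f (x + h) - f x - (\<Sum>i\<in>UNIV. h $ i * d i x)\<bar> \<le> \<epsilon> * (\<Sum>i\<in>UNIV. \<bar>h $ i\<bar>)"
proof -
  text \<open>Change one coordinate at a time, applying the mean value theorem on each coordinate segment.\<close>
  define v where "v I = (\<chi> i. if i \<in> I then h $ i else 0)" for I
  have "\<bar>f (x + v I) - f x - (\<Sum>i\<in>I. h $ i * d i x)\<bar> \<le> \<epsilon> * (\<Sum>i\<in>I. \<bar>h $ i\<bar>)" for I
  proof (induction I rule: infinite_finite_induct)
    case empty
    have "v {} = 0" by (simp add: v_def vec_eq_iff)
    then show ?case by simp
  next
    case (insert j I)
    define z where "z = x + v I"
    define g where "g t = f (z + t *\<^sub>R axis j 1) - t * d j x" for t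
    let ?S = "closed_segment 0 (h $ j)"
    have "((\<lambda>s. f (z + (s + t) *\<^sub>R axis j 1)) has_real_derivative d j (z + t *\<^sub>R axis j 1)) (at 0)" for t
      using line[of "z + t *\<^sub>R axis j 1" j] by (simp add: algebra_simps scaleR_add_left)
    then have "((\<lambda>s. f (z + s *\<^sub>R axis j 1)) has_real_derivative d j (z + t *\<^sub>R axis j 1)) (at (0 + t))" for t
      by (subst DERIV_shift) simp
    then have "(g has_real_derivative (d j (z + t *\<^sub>R axis j 1) - d j x)) (at t)" for t
      unfolding g_def[abs_def] by (auto intro!: derivative_eq_intros)
    then have gd: "(g has_real_derivative (d j (z + t *\<^sub>R axis j 1) - d j x)) (at t within ?S)" for t
      by (rule has_field_derivative_at_within)
    have gb: "norm (d j (z + t *\<^sub>R axis j 1) - d j x) \<le> \<epsilon>" if "t \<in> ?S" for t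
    proof -
      have "\<bar>t\<bar> \<le> \<bar>h $ j\<bar>" using that by (auto simp: closed_segment_eq_real_ivl split: if_splits)
      then have "norm (v I + t *\<^sub>R axis j 1) \<le> norm h"
        by (intro norm_le_componentwise_cart) (use insert(2) in \<open>auto simp: v_def axis_def\<close>)
      then show ?thesis using near[of "z + t *\<^sub>R axis j 1" j] h by (simp add: z_def dist_norm)
    qed
    have "norm (g (h $ j) - g 0) \<le> \<epsilon> * norm (h $ j - 0)"
      by (rule field_differentiable_bound[OF convex_closed_segment gd gb]) auto
    then have step: "\<bar>f (z + h $ j *\<^sub>R axis j 1) - f z - h $ j * d j x\<bar> \<le> \<epsilon> * \<bar>h $ j\<bar>"
      by (simp add: g_def)
    have "v (insert j I) = v I + h $ j *\<^sub>R axis j 1"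
      using insert by (auto simp: v_def vec_eq_iff axis_def)
    then have "f (x + v (insert j I)) - f x - (\<Sum>i\<in>insert j I. h $ i * d i x) =
        (f (z + h $ j *\<^sub>R axis j 1) - f z - h $ j * d j x) + (f (x + v I) - f x - (\<Sum>i\<in>I. h $ i * d i x))"
      using insert by (simp add: z_def algebra_simps)
    then show ?case using step insert by (simp add: distrib_left)
  qed simp
  moreover have "v UNIV = h" by (simp add: v_def vec_eq_iff)
  ultimately show ?thesis by metis
qed

lemma has_derivative_of_continuous_partials:
  fixes f :: "real^'n::finite \<Rightarrow> real" and d :: "'n \<Rightarrow> real^'n \<Rightarrow> real"
  assumes line: "\<And>x i. ((\<lambda>t. f (x + t *\<^sub>R axis i 1)) has_real_derivative d i x) (at 0)"
    and cont: "\<And>i. continuous_on UNIV (d i)"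
  shows "(f has_derivative (\<lambda>h. \<Sum>i\<in>UNIV. h $ i * d i x)) (at x)"
  unfolding has_derivative_at_alt
proof (intro conjI allI impI)
  show "bounded_linear (\<lambda>h. \<Sum>i\<in>UNIV. h $ i * d i x)"
    by (intro bounded_linear_sum bounded_linear_mult_const bounded_linear_vec_nth)
  fix e :: real assume e: "e > 0"
  define \<epsilon> where "\<epsilon> = e / real CARD('n)"
  have \<epsilon>: "\<epsilon> > 0" using e by (simp add: \<epsilon>_def)
  have "\<forall>\<^sub>F y in nhds x. \<forall>i. dist (d i y) (d i x) < \<epsilon>"
  proof (rule eventually_all_finite)
    fix i
    have "((d i) \<longlongrightarrow> d i x) (nhds x)"
      using cont[of i] by (simp add: continuous_on_eq_continuous_at isCont_def tendsto_at_iff_tendsto_nhds)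
    then show "\<forall>\<^sub>F y in nhds x. dist (d i y) (d i x) < \<epsilon>" using \<epsilon> by (rule tendstoD)
  qed
  then obtain \<delta> where \<delta>: "\<delta> > 0" and near: "\<And>y i. dist y x < \<delta> \<Longrightarrow> dist (d i y) (d i x) < \<epsilon>"
    unfolding eventually_nhds_metric by blast
  have near: "\<bar>d i y - d i x\<bar> \<le> \<epsilon>" if "dist y x < \<delta>" for y i
    using near[OF that, of i] by (simp add: dist_real_def)
  show "\<exists>r>0. \<forall>y. norm (y - x) < r \<longrightarrow>
          norm (f y - f x - (\<Sum>i\<in>UNIV. (y - x) $ i * d i x)) \<le> e * norm (y - x)"
  proof (intro exI[of _ \<delta>] conjI allI impI \<delta>)
    fix y assume y: "norm (y - x) < \<delta>"
    have "(\<Sum>i\<in>UNIV. \<bar>(y - x) $ i\<bar>) \<le> (\<Sum>i\<in>(UNIV::'n set). norm (y - x))"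
      by (intro sum_mono component_le_norm_cart)
    then have "\<epsilon> * (\<Sum>i\<in>UNIV. \<bar>(y - x) $ i\<bar>) \<le> \<epsilon> * (real CARD('n) * norm (y - x))"
      using \<epsilon> by (intro mult_left_mono) auto
    also have "\<dots> = e * norm (y - x)" by (simp add: \<epsilon>_def)
    finally have "\<epsilon> * (\<Sum>i\<in>UNIV. \<bar>(y - x) $ i\<bar>) \<le> e * norm (y - x)" .
    then show "norm (f y - f x - (\<Sum>i\<in>UNIV. (y - x) $ i * d i x)) \<le> e * norm (y - x)"
      using increment_bound_by_partials[OF line near y] by simp
  qed
qed

section \<open>Dilations\<close>

lemma dil_dil: "dil \<nu> l (dil \<nu> m x) = dil \<nu> (l * m) x"
  by (simp add: dil_def vec_eq_iff powr_mult)

lemma dil_1 [simp]: "dil \<nu> 1 x = x"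
  by (simp add: dil_def vec_eq_iff)

lemma dil_0 [simp]: "dil \<nu> l 0 = 0"
  by (simp add: dil_def vec_eq_iff)

lemma sum_axis_eq_vec: "(\<Sum>i\<in>UNIV. c i *\<^sub>R axis i (1::real)) = (\<chi> i. c i :: real^'n::finite)"
  by (simp add: vec_eq_iff axis_def if_distrib cong: if_cong)

lemma dil_eq_sum_axis: "dil \<nu> l y = (\<Sum>i\<in>UNIV. (l powr \<nu> i * y $ i) *\<^sub>R axis i (1::real))"
  by (simp add: dil_def sum_axis_eq_vec)

lemma continuous_on_dil [continuous_intros]:
  assumes "continuous_on A g" "continuous_on A h" "\<And>z. z \<in> A \<Longrightarrow> g z > 0"
  shows "continuous_on A (\<lambda>z. dil \<nu> (g z) (h z))"
  unfolding dil_def using assms by (intro continuous_intros) force+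

lemma has_vector_derivative_dil:
  assumes "l > 0"
  shows "((\<lambda>l. dil \<nu> l y) has_vector_derivative (\<chi> i. \<nu> i * l powr (\<nu> i - 1) * y $ i)) (at l)"
proof -
  have "((\<lambda>l. \<Sum>i\<in>UNIV. (l powr \<nu> i * y $ i) *\<^sub>R axis i (1::real)) has_vector_derivative
        (\<Sum>i\<in>UNIV. (\<nu> i * l powr (\<nu> i - 1) * y $ i) *\<^sub>R axis i (1::real))) (at l)"
    using assms by (auto intro!: derivative_eq_intros has_vector_derivative_sum has_vector_derivative_scaleR)
  then show ?thesis by (simp add: dil_eq_sum_axis[abs_def] sum_axis_eq_vec)
qed

lemma Basis_vec_real: "(Basis :: (real^'n::finite) set) = range (\<lambda>i. axis i 1)"
  by (auto simp: Basis_vec_def Basis_real_def)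

text \<open>The dilation is the diagonal map with entries \<open>l powr \<nu> i\<close>, so its Jacobian is \<open>l powr hom_dim \<nu>\<close>.\<close>

lemma integral_lborel_dil:
  fixes h :: "real^'n::finite \<Rightarrow> real"
  assumes l: "l > 0" and hm: "h \<in> borel_measurable borel"
  shows "(\<integral>x. h (dil \<nu> l x) \<partial>lborel) = l powr (- hom_dim \<nu>) * (\<integral>x. h x \<partial>lborel)"
proof -
  define c where "c j = l powr (\<Sum>k\<in>UNIV. \<nu> k * j $ k)" for j :: "real^'n"
  define T where "T x = 0 + (\<Sum>j\<in>Basis. (c j * (x \<bullet> j)) *\<^sub>R j)" for x :: "real^'n"
  have c_axis: "c (axis i 1) = l powr \<nu> i" for i
    by (simp add: c_def axis_def if_distrib cong: if_cong)
  have inj: "inj (\<lambda>i::'n. axis i (1::real))" by (auto simp: inj_def axis_eq_axis)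
  have T: "T = dil \<nu> l"
  proof
    fix x
    have "T x = (\<Sum>i\<in>UNIV. (c (axis i 1) * (x \<bullet> axis i 1)) *\<^sub>R axis i (1::real))"
      unfolding T_def Basis_vec_real by (simp add: sum.reindex[OF inj])
    then show "T x = dil \<nu> l x" by (simp add: c_axis inner_axis dil_eq_sum_axis)
  qed
  have K: "(\<Prod>j\<in>(Basis::(real^'n) set). \<bar>c j\<bar>) = l powr hom_dim \<nu>"
    unfolding Basis_vec_real using l by (simp add: prod.reindex[OF inj] c_axis hom_dim_def powr_sum)
  have "lborel = density (distr lborel borel T) (\<lambda>_. l powr hom_dim \<nu>)"
    unfolding T_def K[symmetric] by (rule lborel_affine_euclidean) (use l in \<open>simp add: c_def\<close>)
  then have "(\<integral>x. h x \<partial>lborel) = integral\<^sup>L (density (distr lborel borel T) (\<lambda>_. l powr hom_dim \<nu>)) h"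
    by simp
  also have "\<dots> = integral\<^sup>L (distr lborel borel T) (\<lambda>x. l powr hom_dim \<nu> *\<^sub>R h x)"
    using hm l by (subst integral_density) auto
  also have "\<dots> = (\<integral>x. l powr hom_dim \<nu> * h (T x) \<partial>lborel)"
    using hm by (subst integral_distr) (auto simp: T_def[abs_def])
  also have "\<dots> = l powr hom_dim \<nu> * (\<integral>x. h (dil \<nu> l x) \<partial>lborel)"
    by (simp add: T)
  finally show ?thesis using l by (simp add: powr_minus field_simps)
qed

definition euler_op :: "('n::finite \<Rightarrow> real) \<Rightarrow> ('n \<Rightarrow> real^'n \<Rightarrow> real) \<Rightarrow> real^'n \<Rightarrow> real" where
  "euler_op \<nu> d x = (\<Sum>i\<in>UNIV. \<nu> i * x $ i * d i x)"

lemma has_real_derivative_comp_dil: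
  fixes f :: "real^'n::finite \<Rightarrow> real" and d :: "'n \<Rightarrow> real^'n \<Rightarrow> real"
  assumes fd: "\<And>x. (f has_derivative (\<lambda>h. \<Sum>i\<in>UNIV. h $ i * d i x)) (at x)" and l: "l > 0"
  shows "((\<lambda>l. f (dil \<nu> l y)) has_real_derivative euler_op \<nu> d (dil \<nu> l y) / l) (at l)"
proof -
  define v where "v = (\<chi> i. \<nu> i * l powr (\<nu> i - 1) * y $ i)"
  have "((\<lambda>l. dil \<nu> l y) has_derivative (\<lambda>h. h *\<^sub>R v)) (at l)"
    using has_vector_derivative_dil[OF l, of \<nu> y] by (simp add: has_vector_derivative_def v_def)
  from has_derivative_compose[OF this fd]
  have A: "((\<lambda>l. f (dil \<nu> l y)) has_derivative (\<lambda>h. \<Sum>i\<in>UNIV. (h *\<^sub>R v) $ i * d i (dil \<nu> l y))) (at l)" .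
  have E: "(\<lambda>h. \<Sum>i\<in>UNIV. (h *\<^sub>R v) $ i * d i (dil \<nu> l y)) = (\<lambda>h. (euler_op \<nu> d (dil \<nu> l y) / l) * h)"
  proof
    fix h :: real
    have "(h *\<^sub>R v) $ i * d i (dil \<nu> l y) = h * (\<nu> i * (dil \<nu> l y) $ i * d i (dil \<nu> l y) / l)" for i
      using l by (simp add: v_def dil_def powr_diff)
    then show "(\<Sum>i\<in>UNIV. (h *\<^sub>R v) $ i * d i (dil \<nu> l y)) = (euler_op \<nu> d (dil \<nu> l y) / l) * h"
      by (simp add: euler_op_def sum_distrib_left sum_divide_distrib mult.commute)
  qed
  show ?thesis unfolding has_field_derivative_def using A[unfolded E] .
qed

lemma radial_deriv_eq_euler_op:
  fixes f :: "real^'n::finite \<Rightarrow> real" and d :: "'n \<Rightarrow> real^'n \<Rightarrow> real"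
  assumes fd: "\<And>x. (f has_derivative (\<lambda>h. \<Sum>i\<in>UNIV. h $ i * d i x)) (at x)" and Nx: "N x > 0"
  shows "radial_deriv \<nu> N f x = euler_op \<nu> d x / N x"
proof -
  have "dil \<nu> (N x) (dil \<nu> (1 / N x) x) = x" using Nx by (simp add: dil_dil)
  then show ?thesis
    unfolding radial_deriv_def
    by (intro DERIV_imp_deriv) (use has_real_derivative_comp_dil[OF fd Nx, of \<nu> "dil \<nu> (1 / N x) x"] in simp)
qed

section \<open>Integration by parts along dilations\<close>

lemma integrable_lborel_vanishing_off_compact:
  fixes g :: "'a::euclidean_space \<Rightarrow> real"
  assumes "compact S" "continuous_on S g" "\<And>x. x \<notin> S \<Longrightarrow> g x = 0"
  shows "integrable lborel g"
proof -
  have "integrable lborel (\<lambda>x. indicator S x *\<^sub>R g x)"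
    by (rule borel_integrable_compact) (use assms in auto)
  moreover have "(\<lambda>x. indicator S x *\<^sub>R g x) = g"
    using assms(3) by (auto simp: fun_eq_iff indicator_def)
  ultimately show ?thesis by simp
qed

lemma integral_cbox_eq_integral_lborel:
  fixes g :: "'a::euclidean_space \<Rightarrow> real"
  assumes c: "continuous_on UNIV g" and s: "\<And>x. x \<notin> cbox a b \<Longrightarrow> g x = 0"
  shows "integral (cbox a b) g = (\<integral>x. g x \<partial>lborel)"
proof -
  have "integrable lborel g"
    by (rule integrable_lborel_vanishing_off_compact[OF compact_cbox continuous_on_subset[OF c] s]) auto
  then have "(g has_integral (\<integral>x. g x \<partial>lborel)) UNIV" by (rule has_integral_integral_real)
  moreover have "(\<lambda>x. if x \<in> cbox a b then g x else 0) = g" using s by (auto simp: fun_eq_iff)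
  ultimately have "(g has_integral (\<integral>x. g x \<partial>lborel)) (cbox a b)"
    using has_integral_restrict_UNIV[of "cbox a b" g] by simp
  then show ?thesis by (rule integral_unique)
qed

text \<open>Differentiation under the integral sign: on \<open>l \<in> [1/2, 2]\<close> all the functions \<open>u \<circ> dil \<nu> l\<close>
  vanish outside one fixed box, where the Leibniz rule for the Henstock--Kurzweil integral applies.\<close>

lemma has_real_derivative_integral_comp_dil:
  fixes u Du \<psi> :: "real^'n::finite \<Rightarrow> real"
  assumes S: "compact S" and u: "continuous_on UNIV u" "\<And>x. x \<notin> S \<Longrightarrow> u x = 0"
    and Du: "continuous_on UNIV Du" "\<And>x. x \<notin> S \<Longrightarrow> Du x = 0"
    and \<psi>: "continuous_on UNIV \<psi>"
    and ud: "\<And>y l. l > 0 \<Longrightarrow> ((\<lambda>l. u (dil \<nu> l y)) has_real_derivative Du (dil \<nu> l y) / l) (at l)"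
  shows "((\<lambda>l. \<integral>x. u (dil \<nu> l x) * \<psi> x \<partial>lborel) has_real_derivative (\<integral>x. Du x * \<psi> x \<partial>lborel)) (at 1)"
proof -
  define U where "U = {1/2..2::real}"
  have U: "convex U" "1 \<in> U" "\<And>l. l \<in> U \<Longrightarrow> l > 0" by (auto simp: U_def)
  define K where "K = (\<lambda>z. dil \<nu> (1 / fst z) (snd z)) ` (U \<times> S)"
  have "compact K"
    unfolding K_def by (intro compact_continuous_image continuous_intros compact_Times S) (auto simp: U_def)
  then obtain a where a: "K \<subseteq> cbox (-a) a"
    using bounded_subset_cbox_symmetric compact_imp_bounded by metis
  have in_box: "x \<in> cbox (-a) a" if "l \<in> U" "dil \<nu> l x \<in> S" for l x
  proof -
    have "x \<in> K"
      unfolding K_def by (rule image_eqI[of _ _ "(l, dil \<nu> l x)"]) (use that U(3)[OF that(1)] in \<open>simp_all add: dil_dil\<close>)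
    then show ?thesis using a by auto
  qed
  define \<Phi> where "\<Phi> l = integral (cbox (-a) a) (\<lambda>x. u (dil \<nu> l x) * \<psi> x)" for l
  have u_dil: "continuous_on UNIV (\<lambda>x. u (dil \<nu> l x))" if "l > 0" for l
    by (rule continuous_on_compose2[OF u(1)]) (use that in \<open>auto intro!: continuous_intros\<close>)
  have \<Phi>_eq: "\<Phi> l = (\<integral>x. u (dil \<nu> l x) * \<psi> x \<partial>lborel)" if l: "l \<in> U" for l
  proof -
    have "u (dil \<nu> l x) * \<psi> x = 0" if "x \<notin> cbox (-a) a" for x
      using in_box[OF l, of x] u(2) that by auto
    then show ?thesis
      unfolding \<Phi>_def by (intro integral_cbox_eq_integral_lborel continuous_on_mult u_dil U(3) l \<psi>)
  qed
  have "(\<Phi> has_field_derivative integral (cbox (-a) a) (\<lambda>x. Du (dil \<nu> 1 x) / 1 * \<psi> x)) (at 1 within U)"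
    unfolding \<Phi>_def
  proof (rule leibniz_rule_field_derivative[OF _ _ _ U(2,1)])
    fix l x assume l: "l \<in> U"
    have "((\<lambda>l. u (dil \<nu> l x) * \<psi> x) has_field_derivative Du (dil \<nu> l x) / l * \<psi> x) (at l)"
      using ud[of l x] U(3)[OF l] by (auto intro!: derivative_eq_intros)
    then show "((\<lambda>l. u (dil \<nu> l x) * \<psi> x) has_field_derivative Du (dil \<nu> l x) / l * \<psi> x) (at l within U)"
      by (rule has_field_derivative_at_within)
    show "(\<lambda>x. u (dil \<nu> l x) * \<psi> x) integrable_on cbox (- a) a"
      by (intro integrable_continuous continuous_on_subset[OF continuous_on_mult[OF u_dil \<psi>]] U(3) l) simp
  next
    have "continuous_on (U \<times> cbox (- a) a) (\<lambda>z. Du (dil \<nu> (fst z) (snd z)))"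
      by (rule continuous_on_compose2[OF Du(1)]) (use U(3) in \<open>auto intro!: continuous_intros\<close>)
    then have "continuous_on (U \<times> cbox (- a) a) (\<lambda>z. Du (dil \<nu> (fst z) (snd z)) / fst z * \<psi> (snd z))"
      using U(3) by (intro continuous_intros continuous_on_compose2[OF \<psi>]) auto
    then show "continuous_on (U \<times> cbox (- a) a) (\<lambda>(l, x). Du (dil \<nu> l x) / l * \<psi> x)"
      by (simp add: case_prod_beta')
  qed
  moreover have "integral (cbox (-a) a) (\<lambda>x. Du x * \<psi> x) = (\<integral>x. Du x * \<psi> x \<partial>lborel)"
  proof (rule integral_cbox_eq_integral_lborel[OF continuous_on_mult[OF Du(1) \<psi>]])
    fix x :: "real^'n" assume "x \<notin> cbox (-a) a"
    then show "Du x * \<psi> x = 0" using in_box[OF U(2), of x] Du(2)[of x] by (cases "x \<in> S") simp_all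
  qed
  moreover have "at 1 within U = at 1" by (rule at_within_interior) (simp add: U_def)
  ultimately have "(\<Phi> has_field_derivative (\<integral>x. Du x * \<psi> x \<partial>lborel)) (at 1)"
    by simp
  then show ?thesis
    by (rule has_field_derivative_transform_within_open[of _ _ _ "{1/2<..<2}"]) (auto simp: \<Phi>_eq U_def)
qed

locale homogeneous_gauge =
  fixes \<nu> :: "'n::finite \<Rightarrow> real" and N :: "real^'n \<Rightarrow> real"
  assumes continuous_N: "continuous_on UNIV N"
    and N_pos: "x \<noteq> 0 \<Longrightarrow> N x > 0"
    and N_dil: "l > 0 \<Longrightarrow> N (dil \<nu> l x) = l * N x"
begin

lemma N_0 [simp]: "N 0 = 0"
  using N_dil[of 2 0] by simp

lemma continuous_on_N [continuous_intros]: "continuous_on A N"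
  using continuous_on_subset[OF continuous_N] by blast

lemma N_nonneg: "N x \<ge> 0"
  by (cases "x = 0") (auto dest: N_pos)

lemma integral_comp_dil_mult_N_powr:
  assumes l: "l > 0" and u: "u \<in> borel_measurable borel"
  shows "(\<integral>x. u (dil \<nu> l x) * N x powr t \<partial>lborel) = l powr (- (hom_dim \<nu> + t)) * (\<integral>x. u x * N x powr t \<partial>lborel)"
proof -
  have [measurable]: "N \<in> borel_measurable borel" "dil \<nu> (1 / l) \<in> borel_measurable borel"
    using continuous_N l by (auto intro!: borel_measurable_continuous_onI continuous_intros)
  have "N (dil \<nu> (1 / l) y) powr t = l powr (- t) * N y powr t" for y
    using l N_nonneg[of y] by (simp add: N_dil powr_mult powr_minus_divide powr_divide)
  moreover have "x = dil \<nu> (1 / l) (dil \<nu> l x)" for x using l by (simp add: dil_dil)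
  ultimately have "(\<integral>x. u (dil \<nu> l x) * N x powr t \<partial>lborel)
      = (\<integral>x. (\<lambda>y. l powr (- t) * (u y * N y powr t)) (dil \<nu> l x) \<partial>lborel)"
    by (metis (no_types, opaque_lifting) mult.left_commute)
  also have "\<dots> = l powr (- hom_dim \<nu>) * (l powr (- t) * (\<integral>x. u x * N x powr t \<partial>lborel))"
    using u by (subst integral_lborel_dil[OF l]) auto
  finally show ?thesis by (simp add: powr_add[symmetric] algebra_simps)
qed

end

locale dil_test_function = homogeneous_gauge \<nu> N
  for \<nu> :: "'n::finite \<Rightarrow> real" and N :: "real^'n \<Rightarrow> real" +
  fixes S :: "(real^'n) set" and f Df :: "real^'n \<Rightarrow> real"
  assumes compact_S: "compact S" and zero_notin_S: "0 \<notin> S"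
    and continuous_f: "continuous_on UNIV f" and f_vanishes: "x \<notin> S \<Longrightarrow> f x = 0"
    and continuous_Df: "continuous_on UNIV Df" and Df_vanishes: "x \<notin> S \<Longrightarrow> Df x = 0"
    and has_real_derivative_f_dil:
      "l > 0 \<Longrightarrow> ((\<lambda>l. f (dil \<nu> l y)) has_real_derivative Df (dil \<nu> l y) / l) (at l)"
begin

lemma N_pos_on_S: "x \<in> S \<Longrightarrow> N x > 0"
  using zero_notin_S by (auto intro: N_pos)

lemma continuous_on_f [continuous_intros]: "continuous_on A f"
  using continuous_on_subset[OF continuous_f] by blast

lemma continuous_on_Df [continuous_intros]: "continuous_on A Df"
  using continuous_on_subset[OF continuous_Df] by blast

lemma continuous_on_N_powr [continuous_intros]: "continuous_on S (\<lambda>x. N x powr t)"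
  by (intro continuous_on_powr' continuous_on_subset[OF continuous_N]) (auto dest: N_pos_on_S)

lemma integrable_vanishing_off_S:
  fixes g :: "real^'n \<Rightarrow> real"
  shows "continuous_on S g \<Longrightarrow> (\<And>x. x \<notin> S \<Longrightarrow> g x = 0) \<Longrightarrow> integrable lborel g"
  by (rule integrable_lborel_vanishing_off_compact[OF compact_S])

text \<open>Differentiate \<open>\<integral> f(dil \<nu> l x) N(x) powr t dx = l powr -(hom_dim \<nu> + t) \<integral> f(x) N(x) powr t dx\<close>
  at \<open>l = 1\<close>. Near \<open>l = 1\<close> the weight may be replaced by a continuous one, as \<open>N\<close> is bounded below on \<open>S\<close>.\<close>

lemma integral_Df_mult_N_powr:
  "(\<integral>x. Df x * N x powr t \<partial>lborel) = - (hom_dim \<nu> + t) * (\<integral>x. f x * N x powr t \<partial>lborel)"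
proof (cases "S = {}")
  case True
  then show ?thesis using f_vanishes Df_vanishes by simp
next
  case False
  obtain x0 where x0: "x0 \<in> S" "\<And>y. y \<in> S \<Longrightarrow> N x0 \<le> N y"
    using continuous_attains_inf[OF compact_S False continuous_on_subset[OF continuous_N]] by auto
  define \<rho> where "\<rho> = N x0"
  have \<rho>: "\<rho> > 0" using N_pos_on_S[OF x0(1)] by (simp add: \<rho>_def)
  define \<psi> where "\<psi> x = (max (N x) (\<rho> / 2)) powr t" for x
  have \<psi>: "continuous_on UNIV \<psi>"
    unfolding \<psi>_def[abs_def] using \<rho> by (intro continuous_intros continuous_N) (auto simp: max_def)
  have \<psi>_eq: "\<psi> x = N x powr t" if "l \<le> 2" "dil \<nu> l x \<in> S" "l > 0" for l x
  proof -
    have "\<rho> \<le> l * N x" using x0(2)[OF that(2)] N_dil[OF that(3)] by (simp add: \<rho>_def)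
    also have "\<dots> \<le> 2 * N x" using that N_nonneg[of x] by (intro mult_right_mono) auto
    finally show ?thesis by (simp add: \<psi>_def max_absorb1)
  qed
  define J where "J = (\<integral>x. f x * N x powr t \<partial>lborel)"
  have [measurable]: "f \<in> borel_measurable borel"
    using continuous_f by (rule borel_measurable_continuous_onI)
  have scaling: "(\<integral>x. f (dil \<nu> l x) * \<psi> x \<partial>lborel) = l powr (- (hom_dim \<nu> + t)) * J" if "l \<in> {1/2<..<2}" for l
  proof -
    have eq: "f (dil \<nu> l x) * \<psi> x = f (dil \<nu> l x) * N x powr t" for x
      using \<psi>_eq[of l x] f_vanishes[of "dil \<nu> l x"] that by (cases "dil \<nu> l x \<in> S") auto
    have "(\<integral>x. f (dil \<nu> l x) * \<psi> x \<partial>lborel) = (\<integral>x. f (dil \<nu> l x) * N x powr t \<partial>lborel)"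
      by (simp only: eq)
    also have "\<dots> = l powr (- (hom_dim \<nu> + t)) * J"
      unfolding J_def using that by (intro integral_comp_dil_mult_N_powr) auto
    finally show ?thesis .
  qed
  have "((\<lambda>l. l powr (- (hom_dim \<nu> + t)) * J) has_real_derivative - (hom_dim \<nu> + t) * J) (at 1)"
    by (auto intro!: derivative_eq_intros)
  then have d1: "((\<lambda>l. \<integral>x. f (dil \<nu> l x) * \<psi> x \<partial>lborel) has_real_derivative - (hom_dim \<nu> + t) * J) (at 1)"
    by (rule has_field_derivative_transform_within_open[of _ _ _ "{1/2<..<2}"]) (use scaling in auto)
  have d2: "((\<lambda>l. \<integral>x. f (dil \<nu> l x) * \<psi> x \<partial>lborel) has_real_derivative (\<integral>x. Df x * \<psi> x \<partial>lborel)) (at 1)"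
    by (rule has_real_derivative_integral_comp_dil[OF compact_S continuous_f _ continuous_Df _ \<psi>
          has_real_derivative_f_dil]) (use f_vanishes Df_vanishes in auto)
  have "Df x * \<psi> x = Df x * N x powr t" for x
    using \<psi>_eq[of 1 x] Df_vanishes[of x] by (cases "x \<in> S") auto
  then have "(\<integral>x. Df x * \<psi> x \<partial>lborel) = (\<integral>x. Df x * N x powr t \<partial>lborel)"
    by (simp only:)
  then show ?thesis using DERIV_unique[OF d2 d1] by (simp add: J_def)
qed

lemma dil_test_function_abs_powr:
  assumes p: "p > 1"
  shows "dil_test_function \<nu> N S (\<lambda>x. \<bar>f x\<bar> powr p) (\<lambda>x. dabs_powr p (f x) * Df x)"
proof unfold_locales
  show "continuous_on UNIV (\<lambda>x. \<bar>f x\<bar> powr p)"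
    using p by (intro continuous_on_powr' continuous_intros) auto
  show "continuous_on UNIV (\<lambda>x. dabs_powr p (f x) * Df x)"
    using p by (intro continuous_intros)
  show "((\<lambda>l. \<bar>f (dil \<nu> l y)\<bar> powr p) has_real_derivative dabs_powr p (f (dil \<nu> l y)) * Df (dil \<nu> l y) / l) (at l)"
    if "l > 0" for l y
    using DERIV_chain2[OF has_real_derivative_abs_powr[OF p] has_real_derivative_f_dil[OF that]] by simp
qed (use compact_S zero_notin_S f_vanishes Df_vanishes in \<open>auto simp: dabs_powr_def\<close>)

end

section \<open>The Hardy inequality with remainder\<close>

context dil_test_function
begin

lemma integral_dabs_powr_mult_Df_add:
  assumes p: "p > 1"
  shows "(\<integral>x. dabs_powr p (f x) * (Df x + K * f x) * N x powr s \<partial>lborel)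
         = (K * p - hom_dim \<nu> - s) * (\<integral>x. \<bar>f x\<bar> powr p * N x powr s \<partial>lborel)"
proof -
  interpret abs_powr: dil_test_function \<nu> N S "\<lambda>x. \<bar>f x\<bar> powr p" "\<lambda>x. dabs_powr p (f x) * Df x"
    by (rule dil_test_function_abs_powr[OF p])
  have eq: "dabs_powr p (f x) * (Df x + K * f x) * N x powr s
      = dabs_powr p (f x) * Df x * N x powr s + K * p * (\<bar>f x\<bar> powr p * N x powr s)" for x
    using dabs_powr_mult_self[of p "f x"] by (simp add: algebra_simps)
  have "integrable lborel (\<lambda>x. dabs_powr p (f x) * Df x * N x powr s)"
    by (intro integrable_vanishing_off_S continuous_intros abs_powr.continuous_Df)
      (simp add: Df_vanishes)
  moreover have "integrable lborel (\<lambda>x. \<bar>f x\<bar> powr p * N x powr s)"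
    by (intro integrable_vanishing_off_S continuous_intros abs_powr.continuous_f)
      (use p in \<open>simp add: f_vanishes\<close>)
  ultimately have "(\<integral>x. dabs_powr p (f x) * (Df x + K * f x) * N x powr s \<partial>lborel)
      = (\<integral>x. dabs_powr p (f x) * Df x * N x powr s \<partial>lborel) + K * p * (\<integral>x. \<bar>f x\<bar> powr p * N x powr s \<partial>lborel)"
    by (simp only: eq) simp
  then show ?thesis using abs_powr.integral_Df_mult_N_powr[of s] by (simp add: algebra_simps)
qed

lemma hardy_inequality_with_remainder:
  assumes p: "p \<ge> 2" and K: "K > 0" "K * p = hom_dim \<nu> - p - \<alpha> * p"
  shows "c_const p * (\<integral>x. \<bar>Df x / N x + K * f x / N x\<bar> powr p / N x powr (\<alpha> * p) \<partial>lborel)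
         \<le> (\<integral>x. \<bar>Df x / N x\<bar> powr p / N x powr (\<alpha> * p) \<partial>lborel)
           - K powr p * (\<integral>x. \<bar>f x\<bar> powr p / N x powr ((\<alpha> + 1) * p) \<partial>lborel)"
proof -
  define L where "L x = \<bar>Df x / N x\<bar> powr p / N x powr (\<alpha> * p)" for x
  define H where "H x = \<bar>f x\<bar> powr p / N x powr ((\<alpha> + 1) * p)" for x
  define X where "X x = dabs_powr p (f x) * (Df x + K * f x) * N x powr (- ((\<alpha> + 1) * p))" for x
  define W where "W x = \<bar>Df x / N x + K * f x / N x\<bar> powr p / N x powr (\<alpha> * p)" for x
  have int: "integrable lborel L" "integrable lborel H" "integrable lborel X" "integrable lborel W"
    unfolding L_def H_def X_def W_def using p
    by (auto intro!: integrable_vanishing_off_S continuous_intros continuous_on_powr'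
        simp: f_vanishes Df_vanishes dest: N_pos_on_S)
  have pointwise: "K powr p * H x - K powr (p - 1) * X x + c_const p * W x \<le> L x" for x
  proof (cases "x = 0")
    case False
    then show ?thesis
      using hardy_pointwise_inequality[OF p K(1) N_pos] by (simp add: L_def H_def X_def W_def)
  qed (simp add: L_def H_def X_def W_def)
  then have "(\<integral>x. K powr p * H x - K powr (p - 1) * X x + c_const p * W x \<partial>lborel) \<le> integral\<^sup>L lborel L"
    using int by (intro integral_mono) auto
  moreover have "integral\<^sup>L lborel X = (K * p - hom_dim \<nu> + (\<alpha> + 1) * p)
      * (\<integral>x. \<bar>f x\<bar> powr p * N x powr (- ((\<alpha> + 1) * p)) \<partial>lborel)"
    unfolding X_def using integral_dabs_powr_mult_Df_add[of p] p by simp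
  moreover have "K * p - hom_dim \<nu> + (\<alpha> + 1) * p = 0" using K by (simp add: algebra_simps)
  ultimately have "c_const p * integral\<^sup>L lborel W \<le> integral\<^sup>L lborel L - K powr p * integral\<^sup>L lborel H"
    using int by simp
  then show ?thesis by (simp only: L_def[abs_def] H_def[abs_def] W_def[abs_def])
qed

lemma cross_term_Holder_bound:
  assumes p: "p > 1"
  shows "\<bar>K * p - hom_dim \<nu> - s\<bar> * (\<integral>x. \<bar>f x\<bar> powr p * N x powr s \<partial>lborel)
         \<le> p * (\<integral>x. \<bar>Df x / N x + K * f x / N x\<bar> powr p / N x powr (\<alpha> * p) \<partial>lborel) powr (1 / p)
             * (\<integral>x. \<bar>f x\<bar> powr p * N x powr ((s + 1 + \<alpha>) * p / (p - 1)) \<partial>lborel) powr ((p - 1) / p)"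
proof -
  define q where "q = p / (p - 1)"
  have q: "q > 1" "1 / p + 1 / q = 1" "1 / q = (p - 1) / p" using p by (auto simp: q_def field_simps)
  define V where "V x = dabs_powr p (f x) * (Df x + K * f x) * N x powr s" for x
  define F where "F x = \<bar>Df x / N x + K * f x / N x\<bar> * N x powr (- \<alpha>)" for x
  define G where "G x = \<bar>f x\<bar> powr (p - 1) * N x powr (s + 1 + \<alpha>)" for x
  have abs_V: "\<bar>V x\<bar> = p * (F x * G x)" for x
  proof (cases "x = 0")
    case False
    define r where "r = N x"
    have r: "r > 0" using N_pos[OF False] by (simp add: r_def)
    have "\<bar>Df x + K * f x\<bar> = r * \<bar>Df x / r + K * f x / r\<bar>"
      using r by (simp add: add_divide_distrib[symmetric] abs_divide)
    then have "\<bar>V x\<bar> = p * \<bar>f x\<bar> powr (p - 1) * (r * \<bar>Df x / r + K * f x / r\<bar>) * r powr s"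
      using p by (simp add: V_def abs_mult abs_dabs_powr r_def[symmetric])
    moreover have "r powr (- \<alpha>) * r powr (s + 1 + \<alpha>) = r * r powr s"
      using r by (simp add: powr_add[symmetric]) (simp add: powr_add)
    ultimately show ?thesis by (simp add: F_def G_def r_def[symmetric] algebra_simps)
  qed (simp add: V_def F_def G_def dabs_powr_def)
  have F_powr: "F x powr p = \<bar>Df x / N x + K * f x / N x\<bar> powr p / N x powr (\<alpha> * p)" for x
  proof (cases "x = 0")
    case False
    have "F x powr p = \<bar>Df x / N x + K * f x / N x\<bar> powr p * N x powr (- (\<alpha> * p))"
      by (simp add: F_def powr_mult powr_powr)
    then show ?thesis using N_pos[OF False] by (simp add: powr_minus_divide)
  qed (simp add: F_def)
  have G_powr: "G x powr q = \<bar>f x\<bar> powr p * N x powr ((s + 1 + \<alpha>) * p / (p - 1))" for x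
    using p by (simp add: G_def q_def powr_mult powr_powr N_nonneg)
  have int_V: "integrable lborel V" and int_FG: "integrable lborel (\<lambda>x. F x * G x)"
    and int_F: "integrable lborel (\<lambda>x. F x powr p)" and int_G: "integrable lborel (\<lambda>x. G x powr q)"
    unfolding V_def F_def G_def F_powr G_powr using p q(1)
    by (auto intro!: integrable_vanishing_off_S continuous_intros continuous_on_powr'
        simp: f_vanishes Df_vanishes dest: N_pos_on_S)
  have "\<bar>K * p - hom_dim \<nu> - s\<bar> * (\<integral>x. \<bar>f x\<bar> powr p * N x powr s \<partial>lborel) = \<bar>integral\<^sup>L lborel V\<bar>"
    unfolding V_def integral_dabs_powr_mult_Df_add[OF p]
    by (simp add: abs_mult integral_nonneg_AE)
  also have "\<dots> \<le> p * (\<integral>x. F x * G x \<partial>lborel)"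
    using integral_abs_bound_integral[OF int_V, of "\<lambda>x. p * (F x * G x)"] int_FG abs_V by simp
  also have "\<dots> \<le> p * ((\<integral>x. F x powr p \<partial>lborel) powr (1 / p) * (\<integral>x. G x powr q \<partial>lborel) powr (1 / q))"
    using Holder_inequality[OF p q(1,2) _ _ int_F int_G int_FG] p by (auto simp: F_def G_def)
  finally show ?thesis by (simp only: F_powr G_powr q(3))
qed

lemma remainder_lower_bound:
  assumes p: "p > 1" and K: "K * p = hom_dim \<nu> - p - \<alpha> * p"
  shows "\<bar>(hom_dim \<nu> * (p - 1) - p * b) / p\<^sup>2\<bar> powr p
           * (\<integral>x. \<bar>f x\<bar> powr p * N x powr (hom_dim \<nu> - p - \<alpha> * p - (hom_dim \<nu> + p * b) / p) \<partial>lborel) powr p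
           / (\<integral>x. \<bar>f x\<bar> powr p * N x powr (hom_dim \<nu> - p - \<alpha> * p - b * p / (p - 1)) \<partial>lborel) powr (p - 1)
         \<le> (\<integral>x. \<bar>Df x / N x + K * f x / N x\<bar> powr p / N x powr (\<alpha> * p) \<partial>lborel)"
    (is "?m powr p * ?I powr p / ?J powr (p - 1) \<le> ?A")
proof -
  define s where "s = hom_dim \<nu> - p - \<alpha> * p - (hom_dim \<nu> + p * b) / p"
  have coeff: "\<bar>K * p - hom_dim \<nu> - s\<bar> = p * ?m"
    using p by (simp add: s_def K abs_divide power2_eq_square field_simps abs_minus_commute)
  have exponent: "(s + 1 + \<alpha>) * p / (p - 1) = hom_dim \<nu> - p - \<alpha> * p - b * p / (p - 1)"
    using p by (simp add: s_def field_simps)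
  have nonneg: "?I \<ge> 0" "?J \<ge> 0" "?A \<ge> 0" by (auto intro!: integral_nonneg_AE)
  have "p * (?m * ?I) \<le> p * (?A powr (1 / p) * ?J powr ((p - 1) / p))"
    using cross_term_Holder_bound[OF p, of K s \<alpha>, unfolded coeff exponent, unfolded s_def]
    by (simp only: mult.assoc)
  then have "?m * ?I \<le> ?A powr (1 / p) * ?J powr ((p - 1) / p)"
    by (rule mult_left_le_imp_le) (use p in simp)
  then have "(?m * ?I) powr p \<le> (?A powr (1 / p) * ?J powr ((p - 1) / p)) powr p"
    using nonneg p by (intro powr_mono2) auto
  moreover have "(?m * ?I) powr p = ?m powr p * ?I powr p"
    using nonneg by (intro powr_mult)
  moreover have "(?A powr (1 / p) * ?J powr ((p - 1) / p)) powr p = ?A * ?J powr (p - 1)"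
    using nonneg p by (simp add: powr_mult powr_powr)
  ultimately have "?m powr p * ?I powr p \<le> ?A * ?J powr (p - 1)"
    by simp
  then show ?thesis
    using nonneg by (cases "?J = 0") (simp_all add: pos_divide_le_eq)
qed

end

section \<open>Smooth functions supported away from the origin\<close>

lemma C0_infinity_punctured_partials:
  fixes f :: "real^'n::finite \<Rightarrow> real"
  assumes f: "f \<in> C0_infinity_punctured"
  defines "S \<equiv> closure {x. f x \<noteq> 0}"
  shows "compact S" "0 \<notin> S" "\<And>x. x \<notin> S \<Longrightarrow> f x = 0" "continuous_on UNIV f"
    "\<And>i. continuous_on UNIV (dpart (axis i 1) f)"
    "\<And>x i. x \<notin> S \<Longrightarrow> dpart (axis i 1) f x = 0"
    "\<And>x i. ((\<lambda>t. f (x + t *\<^sub>R axis i 1)) has_real_derivative dpart (axis i 1) f x) (at 0)"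
proof -
  have C: "C_infinity_on (UNIV - {0}) f" and S: "compact S" "0 \<notin> S"
    using f by (auto simp: C0_infinity_punctured_def S_def)
  have smooth_cont: "continuous_on (UNIV - {0}) (iter_dpart vs f)" if "set vs \<subseteq> Basis" for vs
    using C that unfolding C_infinity_on_def by blast
  have smooth_diff: "(\<lambda>t. iter_dpart vs f (x + t *\<^sub>R v)) differentiable (at 0)"
    if "set vs \<subseteq> Basis" "x \<noteq> 0" "v \<in> Basis" for vs x v
    using C that unfolding C_infinity_on_def by blast
  show "compact S" "0 \<notin> S" by (fact S)+
  show f0: "f x = 0" if "x \<notin> S" for x
    using that closure_subset[of "{x. f x \<noteq> 0}"] by (auto simp: S_def)
  have open_S: "open (- S)" using S by (simp add: compact_imp_closed open_Compl)
  have line_off_S: "((\<lambda>t. f (x + t *\<^sub>R axis i 1)) has_real_derivative 0) (at 0)" if x: "x \<notin> S" for x i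
  proof -
    have "open ((\<lambda>t::real. x + t *\<^sub>R axis i 1) -` (- S))"
      by (rule open_vimage[OF open_S]) (intro continuous_intros)
    then show ?thesis
      by (rule has_field_derivative_transform_within_open[OF DERIV_const]) (use x f0 in auto)
  qed
  show dpart_off_S: "dpart (axis i 1) f x = 0" if "x \<notin> S" for x i
    using line_off_S[OF that, of i]
    by (simp add: dpart_def has_real_derivative_iff_has_vector_derivative vector_derivative_at)
  show "((\<lambda>t. f (x + t *\<^sub>R axis i 1)) has_real_derivative dpart (axis i 1) f x) (at 0)" for x i
  proof (cases "x \<in> S")
    case True
    then have "(\<lambda>t. f (x + t *\<^sub>R axis i 1)) differentiable (at 0)"
      using smooth_diff[of "[]" x "axis i 1"] S(2) by auto
    then show ?thesis
      unfolding dpart_def has_real_derivative_iff_has_vector_derivative by (simp add: vector_derivative_works[symmetric])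
  qed (use line_off_S dpart_off_S in simp)
  text \<open>Off \<open>0\<close> continuity comes from smoothness, near \<open>0\<close> from vanishing on the open set \<open>- S\<close>.\<close>
  have continuous_UNIV: "continuous_on UNIV g"
    if "continuous_on (UNIV - {0}) g" "\<And>x. x \<notin> S \<Longrightarrow> g x = 0" for g :: "real^'n \<Rightarrow> real"
  proof -
    have "continuous_on (- S) g" by (rule continuous_on_eq[OF continuous_on_const[of _ 0]]) (use that in auto)
    then have "continuous_on ((UNIV - {0}) \<union> (- S)) g"
      using that open_S by (intro continuous_on_open_Un) auto
    moreover have "(UNIV - {0}) \<union> (- S) = UNIV" using S by auto
    ultimately show ?thesis by simp
  qed
  show "continuous_on UNIV f"
    using smooth_cont[of "[]"] f0 by (intro continuous_UNIV) auto
  show "continuous_on UNIV (dpart (axis i 1) f)" for i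
    using smooth_cont[of "[axis i 1]"] dpart_off_S by (intro continuous_UNIV) auto
qed

lemma has_derivative_C0_infinity_punctured:
  fixes f :: "real^'n::finite \<Rightarrow> real"
  assumes "f \<in> C0_infinity_punctured"
  shows "(f has_derivative (\<lambda>h. \<Sum>i\<in>UNIV. h $ i * dpart (axis i 1) f x)) (at x)"
  using C0_infinity_punctured_partials(7,5)[OF assms] by (rule has_derivative_of_continuous_partials)

lemma (in homogeneous_gauge) dil_test_function_C0_infinity_punctured:
  assumes f: "f \<in> C0_infinity_punctured"
  shows "dil_test_function \<nu> N (closure {x. f x \<noteq> 0}) f (euler_op \<nu> (\<lambda>i. dpart (axis i 1) f))"
proof unfold_locales
  note partials = C0_infinity_punctured_partials[OF f]
  show "continuous_on UNIV (euler_op \<nu> (\<lambda>i. dpart (axis i 1) f))"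
    unfolding euler_op_def[abs_def] by (intro continuous_intros partials(5))
  show "euler_op \<nu> (\<lambda>i. dpart (axis i 1) f) x = 0" if "x \<notin> closure {x. f x \<noteq> 0}" for x
    using partials(6)[OF that] by (simp add: euler_op_def)
  show "((\<lambda>l. f (dil \<nu> l y)) has_real_derivative euler_op \<nu> (\<lambda>i. dpart (axis i 1) f) (dil \<nu> l y) / l) (at l)"
    if "l > 0" for l y
    by (rule has_real_derivative_comp_dil[OF has_derivative_C0_infinity_punctured[OF f] that])
qed (fact C0_infinity_punctured_partials[OF f])+

lemma (in homogeneous_gauge) radial_deriv_C0_infinity_punctured:
  assumes "f \<in> C0_infinity_punctured" "x \<noteq> 0"
  shows "radial_deriv \<nu> N f x = euler_op \<nu> (\<lambda>i. dpart (axis i 1) f) x / N x"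
  using has_derivative_C0_infinity_punctured[OF assms(1)] N_pos[OF assms(2)]
  by (rule radial_deriv_eq_euler_op)

theorem theorem3p1:
  fixes gmul :: "real^'n::finite \<Rightarrow> real^'n \<Rightarrow> real^'n"
    and ginv :: "real^'n \<Rightarrow> real^'n"
    and \<nu> :: "'n \<Rightarrow> real"
    and N :: "real^'n \<Rightarrow> real"
    and f :: "real^'n \<Rightarrow> real"
    and p \<alpha> b :: real
  assumes G: "homogeneous_group gmul ginv \<nu>"
    and Q3: "hom_dim \<nu> \<ge> 3"
    and qn: "homogeneous_quasi_norm ginv \<nu> N"
    and p: "2 \<le> p" "p < hom_dim \<nu>"
    and \<alpha>: "\<alpha> < (hom_dim \<nu> - p) / p"
    and f: "f \<in> C0_infinity_punctured"
  shows "(\<integral>x. \<bar>radial_deriv \<nu> N f x\<bar> powr p / N x powr (\<alpha> * p) \<partial>lborel)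
           - ((hom_dim \<nu> - p - \<alpha> * p) / p) powr p
             * (\<integral>x. \<bar>f x\<bar> powr p / N x powr ((\<alpha> + 1) * p) \<partial>lborel)
         \<ge> c_const p * \<bar>(hom_dim \<nu> * (p - 1) - p * b) / p\<^sup>2\<bar> powr p
           * (\<integral>x. \<bar>f x\<bar> powr p * N x powr (hom_dim \<nu> - p - \<alpha> * p - (hom_dim \<nu> + p * b) / p) \<partial>lborel) powr p
           / (\<integral>x. \<bar>f x\<bar> powr p * N x powr (hom_dim \<nu> - p - \<alpha> * p - b * p / (p - 1)) \<partial>lborel) powr (p - 1)"
proof -
  interpret homogeneous_gauge \<nu> N
    using qn by unfold_locales (auto simp: homogeneous_quasi_norm_def order_le_less)
  define Df where "Df = euler_op \<nu> (\<lambda>i. dpart (axis i 1) f)"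
  interpret dil_test_function \<nu> N "closure {x. f x \<noteq> 0}" f Df
    unfolding Df_def using f by (rule dil_test_function_C0_infinity_punctured)
  define K where "K = (hom_dim \<nu> - p - \<alpha> * p) / p"
  have K: "K > 0" "K * p = hom_dim \<nu> - p - \<alpha> * p"
    using p \<alpha> by (auto simp: K_def field_simps)
  have "\<bar>radial_deriv \<nu> N f x\<bar> powr p / N x powr (\<alpha> * p) = \<bar>Df x / N x\<bar> powr p / N x powr (\<alpha> * p)" for x
    by (cases "x = 0") (simp_all add: Df_def radial_deriv_C0_infinity_punctured[OF f])
  then have radial: "(\<integral>x. \<bar>radial_deriv \<nu> N f x\<bar> powr p / N x powr (\<alpha> * p) \<partial>lborel)
      = (\<integral>x. \<bar>Df x / N x\<bar> powr p / N x powr (\<alpha> * p) \<partial>lborel)"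
    by (simp only:)
  have "c_const p * \<bar>(hom_dim \<nu> * (p - 1) - p * b) / p\<^sup>2\<bar> powr p
           * (\<integral>x. \<bar>f x\<bar> powr p * N x powr (hom_dim \<nu> - p - \<alpha> * p - (hom_dim \<nu> + p * b) / p) \<partial>lborel) powr p
           / (\<integral>x. \<bar>f x\<bar> powr p * N x powr (hom_dim \<nu> - p - \<alpha> * p - b * p / (p - 1)) \<partial>lborel) powr (p - 1)
         \<le> c_const p * (\<integral>x. \<bar>Df x / N x + K * f x / N x\<bar> powr p / N x powr (\<alpha> * p) \<partial>lborel)"
    using mult_left_mono[OF remainder_lower_bound[of p K \<alpha> b] c_const_nonneg[of p]] K p by simp
  then show ?thesis
    using hardy_inequality_with_remainder[OF p(1) K] unfolding radial K_def by linarith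
qed

end
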